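(* Let $f:\mathbb{R}^{m\times n}\to\mathbb{R}$ be $L$-smooth, i.e. $f({\bm X})\le f({\bm Y})+\langle\nabla f({\bm Y}),{\bm X}-{\bm Y}\rangle+\frac L2\|{\bm X}-{\bm Y}\|_F^2$ for all ${\bm X},{\bm Y}$, and let $f_*:=\inf_{{\bm X}} f({\bm X})>-\infty$. Fix $\tau>0$, $K\ge 1$, an initial point ${\bm X}_0$, and consider the iteration ${\bm X}_{k+1}={\bm X}_k-\eta\,\mathcal{C}_\tau({\bm G}_k)$ with constant step size $\eta=\frac{1}{4L\sqrt K}$, where the random matrices ${\bm G}_k$ satisfy $\mathbb{E}[{\bm G}_k\mid{\bm X}_k]=\nabla f({\bm X}_k)$ and $\mathbb{E}[\|{\bm G}_k-\nabla f({\bm X}_k)\|_F^\alpha\mid{\bm X}_k]\le\sigma^\alpha$ for some $\alpha\in(1,2]$ and $\sigma>0$. Then $$\min_{0\le k\le K-1}\mathbb{E}\big[\|\nabla f({\bm X}_k)\|_F^2\big]\le\frac{16L(f({\bm X}_0)-f_* )}{\sqrt K}+\frac{C_{\alpha,d}\,\tau^{2-\alpha}\sigma^\alpha}{8\sqrt K}+\frac2K\sum_{k=0}^{K-1}\Delta_k,$$ where $\Delta_k:=\mathbb{E}\big[\|\nabla f({\bm X}_k)-\mathbb{E}[\mathcal{C}_\tau({\bm G}_k)\mid{\bm X}_k]\|_F^2\big]$, $C_{\alpha,d}:=2^{4-\alpha}d^{1-\alpha/2}$ and $d=\min\{m,n\}$.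
   Context: $\|\cdot\|_F$ is the Frobenius norm and $\langle\cdot,\cdot\rangle$ the Frobenius inner product. Spectral clipping: for ${\bm G}\in\mathbb{R}^{m\times n}$ with (thin) SVD ${\bm G}={\bm U}\,\mathrm{diag}(\sigma_1,\dots,\sigma_d){\bm V}^\top$, $d=\min\{m,n\}$, and threshold $\tau>0$, define $\mathcal{C}_\tau({\bm G}):={\bm U}\,\mathrm{diag}(\min\{\sigma_1,\tau\},\dots,\min\{\sigma_d,\tau\}){\bm V}^\top$ (singular values exceeding $\tau$ are replaced by $\tau$, singular vectors unchanged). *)

theory Defs
  imports "HOL-Analysis.Analysis" "HOL-Probability.Probability"
begin

text \<open>Matrices in R^{m x n} are modelled as real^'n^'m (rows indexed by 'm).
 The norm on this type is the Frobenius norm and the inner product is the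
 Frobenius inner product.\<close>

definition svd_rank :: "('n::finite) itself \<Rightarrow> ('m::finite) itself \<Rightarrow> nat" where
  "svd_rank _ _ = min CARD('m) CARD('n)"

definition outer_prod :: "real^'m \<Rightarrow> real^'n \<Rightarrow> real^'n^'m" where
  "outer_prod u v = (\<chi> i j. u $ i * v $ j)"

definition is_thin_svd :: "real^'n^'m \<Rightarrow> (nat \<Rightarrow> real^'m) \<Rightarrow> (nat \<Rightarrow> real^'n) \<Rightarrow> (nat \<Rightarrow> real) \<Rightarrow> bool" where
  "is_thin_svd G u v s \<longleftrightarrow>
     (let d = svd_rank TYPE('n) TYPE('m) in
       (\<forall>i<d. \<forall>j<d. u i \<bullet> u j = (if i = j then 1 else 0)) \<and>
       (\<forall>i<d. \<forall>j<d. v i \<bullet> v j = (if i = j then 1 else 0)) \<and>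
       (\<forall>i<d. 0 \<le> s i) \<and>
       G = (\<Sum>i<d. s i *\<^sub>R outer_prod (u i) (v i)))"

definition spec_clip :: "real \<Rightarrow> real^'n^'m \<Rightarrow> real^'n^'m" where
  "spec_clip \<tau> G = (SOME C. \<exists>u v s. is_thin_svd G u v s \<and>
      C = (\<Sum>i<svd_rank TYPE('n) TYPE('m). min (s i) \<tau> *\<^sub>R outer_prod (u i) (v i)))"

definition gen_alg :: "'a measure \<Rightarrow> ('a \<Rightarrow> real^'n^'m) \<Rightarrow> 'a measure" where
  "gen_alg M Y = vimage_algebra (space M) Y borel"

definition mat_cond_exp :: "'a measure \<Rightarrow> 'a measure \<Rightarrow> ('a \<Rightarrow> real^'n^'m) \<Rightarrow> 'a \<Rightarrow> real^'n^'m" where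
  "mat_cond_exp M F H = (\<lambda>\<omega>. \<chi> i j. real_cond_exp M F (\<lambda>\<omega>'. H \<omega>' $ i $ j) \<omega>)"

end

theory Submission
  imports Defs
begin

text \<open>Spectral clipping \<open>C\<^sub>\<tau>\<close> is the Frobenius projection onto the ball of radius \<open>\<tau>\<close> in the
  spectral norm. Hence it is nonexpansive, and its values have Frobenius norm at most
  \<open>sqrt d \<tau>\<close>; interpolating the two bounds gives
  \<open>\<parallel>C\<^sub>\<tau> G - C\<^sub>\<tau> (\<nabla>f X)\<parallel>\<^sup>2 \<le> (2 sqrt d \<tau>)\<^bsup>2-\<alpha>\<^esup> \<parallel>G - \<nabla>f X\<parallel>\<^bsup>\<alpha>\<^esup>\<close>, whose expectation is controlled by
  the \<open>\<alpha>\<close>-th moment of the noise. In the smoothness inequality for one step, split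
  \<open>\<parallel>C\<^sub>\<tau> G\<parallel>\<^sup>2 = -\<parallel>D\<parallel>\<^sup>2 + 2\<langle>D, C\<^sub>\<tau> G\<rangle> + \<parallel>C\<^sub>\<tau> G - D\<parallel>\<^sup>2\<close> with \<open>D = C\<^sub>\<tau> (\<nabla>f X\<^sub>k)\<close>; in the inner products
  with \<open>X\<^sub>k\<close>-measurable factors, \<open>C\<^sub>\<tau> G\<^sub>k\<close> may be replaced by its conditional mean, whose distance to
  \<open>\<nabla>f X\<^sub>k\<close> is \<open>\<Delta>\<^sub>k\<close>. For \<open>L\<eta> \<le> 1/32\<close>, i.e. \<open>K \<ge> 64\<close>, this gives a descent inequality that
  telescopes to the bound. For \<open>K < 64\<close> the bound already holds at \<open>k = 0\<close>, because
  \<open>\<parallel>\<nabla>f Y\<parallel>\<^sup>2 \<le> 2L (f Y - f\<^sub>*)\<close> for every \<open>L\<close>-smooth \<open>f\<close>.\<close>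

section \<open>Outer products and the thin SVD\<close>

definition orthonormal_upto :: "nat \<Rightarrow> (nat \<Rightarrow> 'a::real_inner) \<Rightarrow> bool" where
  "orthonormal_upto r u \<longleftrightarrow> (\<forall>i<r. \<forall>j<r. u i \<bullet> u j = (if i = j then 1 else 0))"

lemma orthonormal_upto_norm: "orthonormal_upto r u \<Longrightarrow> i < r \<Longrightarrow> norm (u i) = 1"
  unfolding orthonormal_upto_def by (simp add: norm_eq_1)

lemma is_thin_svd_iff:
  fixes G :: "real^'n^'m"
  shows "is_thin_svd G u v s \<longleftrightarrow>
    orthonormal_upto (min CARD('m) CARD('n)) u \<and> orthonormal_upto (min CARD('m) CARD('n)) v \<and>
    (\<forall>i<min CARD('m) CARD('n). 0 \<le> s i) \<and>
    G = (\<Sum>i<min CARD('m) CARD('n). s i *\<^sub>R outer_prod (u i) (v i))"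
  unfolding is_thin_svd_def svd_rank_def orthonormal_upto_def Let_def ..

lemma outer_prod_inner: "outer_prod u v \<bullet> (A::real^'n^'m) = u \<bullet> (A *v v)"
  unfolding outer_prod_def inner_vec_def matrix_vector_mult_def
  by (simp add: sum_distrib_left mult_ac)

lemma outer_prod_inner_outer_prod: "outer_prod u v \<bullet> outer_prod u' v' = (u \<bullet> u') * (v \<bullet> v')"
  unfolding outer_prod_def inner_vec_def
  by (simp add: sum_distrib_left sum_distrib_right mult_ac)

lemma scaleR_outer_prod_mult_vec: "(c *\<^sub>R outer_prod u v) *v w = (c * (v \<bullet> w)) *\<^sub>R u"
  unfolding outer_prod_def inner_vec_def matrix_vector_mult_def
  by (simp add: vec_eq_iff sum_distrib_left algebra_simps)

lemma vec_mult_scaleR_outer_prod: "w v* (c *\<^sub>R outer_prod u v) = (c * (w \<bullet> u)) *\<^sub>R v"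
  unfolding outer_prod_def inner_vec_def vector_matrix_mult_def
  by (simp add: vec_eq_iff sum_distrib_left sum_distrib_right algebra_simps)

lemma inner_sum_outer_prod:
  assumes "orthonormal_upto d u" "orthonormal_upto d v"
  shows "(\<Sum>i<d. a i *\<^sub>R outer_prod (u i) (v i)) \<bullet> (\<Sum>i<d. b i *\<^sub>R outer_prod (u i) (v i))
    = (\<Sum>i<d. a i * b i)"
proof -
  have "(\<Sum>i<d. a i *\<^sub>R outer_prod (u i) (v i)) \<bullet> (\<Sum>i<d. b i *\<^sub>R outer_prod (u i) (v i))
     = (\<Sum>i<d. \<Sum>j<d. b i * (a j * ((u j \<bullet> u i) * (v j \<bullet> v i))))"
    by (simp add: inner_sum_left inner_sum_right outer_prod_inner_outer_prod sum_distrib_left)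
  also have "\<dots> = (\<Sum>i<d. \<Sum>j<d. if i = j then b i * a j else 0)"
    using assms unfolding orthonormal_upto_def by (intro sum.cong refl) auto
  finally show ?thesis
    by (simp add: mult.commute)
qed

lemma norm_sum_outer_prod:
  assumes "orthonormal_upto d u" "orthonormal_upto d v"
  shows "(norm (\<Sum>i<d. a i *\<^sub>R outer_prod (u i) (v i)))\<^sup>2 = (\<Sum>i<d. (a i)\<^sup>2)"
  unfolding power2_norm_eq_inner inner_sum_outer_prod[OF assms] by (simp add: power2_eq_square)

lemma bessel_inequality:
  fixes x :: "'a::real_inner"
  assumes "orthonormal_upto d u"
  shows "(\<Sum>i<d. (x \<bullet> u i)\<^sup>2) \<le> (norm x)\<^sup>2"
proof -
  let ?p = "\<Sum>i<d. (x \<bullet> u i) *\<^sub>R u i"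
  have "?p \<bullet> ?p = (\<Sum>i<d. \<Sum>j<d. (x \<bullet> u i) * ((x \<bullet> u j) * (u j \<bullet> u i)))"
    by (simp add: inner_sum_left inner_sum_right sum_distrib_left)
  also have "\<dots> = (\<Sum>i<d. \<Sum>j<d. if i = j then (x \<bullet> u i) * (x \<bullet> u j) else 0)"
    using assms unfolding orthonormal_upto_def by (intro sum.cong refl) auto
  finally have pp: "?p \<bullet> ?p = (\<Sum>i<d. (x \<bullet> u i)\<^sup>2)"
    by (simp add: power2_eq_square)
  have xp: "x \<bullet> ?p = (\<Sum>i<d. (x \<bullet> u i)\<^sup>2)"
    by (simp add: inner_sum_right power2_eq_square)
  have "0 \<le> (x - ?p) \<bullet> (x - ?p)"
    by simp
  also have "\<dots> = x \<bullet> x - 2 * (x \<bullet> ?p) + ?p \<bullet> ?p"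
    by (simp add: inner_diff_left inner_diff_right inner_commute)
  finally show ?thesis
    using pp xp by (simp add: power2_norm_eq_inner)
qed

lemma exists_unit_orthogonal_upto:
  fixes u :: "nat \<Rightarrow> 'a::euclidean_space"
  assumes "r < DIM('a)"
  obtains x where "norm x = 1" "\<forall>i<r. x \<bullet> u i = 0"
proof -
  have "dim (span (u ` {..<r})) \<le> card (u ` {..<r})"
    by (simp add: dim_le_card span_superset)
  also have "\<dots> \<le> r"
    using card_image_le[of "{..<r}" u] by simp
  finally have "span (u ` {..<r}) \<noteq> UNIV"
    using assms by (metis dim_UNIV not_le dim_span)
  then obtain a where a: "a \<noteq> 0" "\<forall>x\<in>span (u ` {..<r}). a \<bullet> x = 0"
    using span_not_UNIV_orthogonal by blast
  show ?thesis
    using a by (intro that[of "a /\<^sub>R norm a"]) (simp_all add: span_base)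
qed

lemma orthogonal_orthonormal_basis_eq_0:
  fixes u :: "nat \<Rightarrow> 'a::euclidean_space"
  assumes u: "orthonormal_upto DIM('a) u" and z: "\<forall>i<DIM('a). z \<bullet> u i = 0"
  shows "z = 0"
proof -
  let ?B = "u ` {..<DIM('a)}"
  have "inj_on u {..<DIM('a)}"
  proof
    fix i j assume "i \<in> {..<DIM('a)}" "j \<in> {..<DIM('a)}" "u i = u j"
    then show "i = j"
      using u unfolding orthonormal_upto_def by (metis lessThan_iff zero_neq_one)
  qed
  then have card: "card ?B = dim (UNIV::'a set)"
    by (simp add: card_image)
  have "pairwise orthogonal ?B"
    using u unfolding pairwise_def orthogonal_def orthonormal_upto_def by auto
  moreover have "0 \<notin> ?B"
    using u unfolding orthonormal_upto_def by force
  ultimately have "independent ?B"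
    by (rule pairwise_orthogonal_independent)
  then have "z \<in> span ?B"
    using card_eq_dim[of ?B UNIV] card by auto
  then have "orthogonal z z"
    by (rule orthogonal_to_span) (use z in \<open>auto simp: orthogonal_def inner_commute\<close>)
  then show ?thesis
    by (simp add: orthogonal_def)
qed

lemma eq_scaleR_if_inner_maximal:
  fixes a w :: "'a::real_inner"
  assumes S: "subspace S" "a \<in> S" "w \<in> S" and a: "norm a = 1"
    and max: "\<And>x. x \<in> S \<Longrightarrow> norm x = 1 \<Longrightarrow> x \<bullet> w \<le> a \<bullet> w"
  shows "w = (a \<bullet> w) *\<^sub>R a"
proof -
  have "norm w \<le> a \<bullet> w"
  proof (cases "w = 0")
    case False
    have "(w /\<^sub>R norm w) \<bullet> w \<le> a \<bullet> w"
      using False S by (intro max) (simp_all add: subspace_scale)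
    then show ?thesis
      using False by (simp add: dot_square_norm power2_eq_square field_simps)
  qed simp
  moreover have "a \<bullet> w \<le> norm w"
    using norm_cauchy_schwarz[of a w] a by simp
  ultimately have aw: "a \<bullet> w = norm w"
    by simp
  have "(norm (w - (a \<bullet> w) *\<^sub>R a))\<^sup>2 = (norm w)\<^sup>2 - (a \<bullet> w)\<^sup>2"
    using a unfolding power2_norm_eq_inner
    by (simp add: inner_diff_left inner_diff_right inner_commute power2_eq_square norm_eq_1)
  then show ?thesis
    using aw by simp
qed

lemma bilinear_attains_max_on_unit_spheres:
  fixes R :: "real^'n^'m"
  assumes "closed S" "closed T" "S \<inter> sphere 0 1 \<noteq> {}" "T \<inter> sphere 0 1 \<noteq> {}"
  obtains x y where "x \<in> S" "norm x = 1" "y \<in> T" "norm y = 1"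
    "\<And>x' y'. x' \<in> S \<Longrightarrow> norm x' = 1 \<Longrightarrow> y' \<in> T \<Longrightarrow> norm y' = 1 \<Longrightarrow> x' \<bullet> (R *v y') \<le> x \<bullet> (R *v y)"
proof -
  have "compact ((S \<inter> sphere 0 1) \<times> (T \<inter> sphere 0 1))"
    using assms by (intro compact_Times closed_Int_compact compact_sphere)
  moreover have "(S \<inter> sphere 0 1) \<times> (T \<inter> sphere 0 1) \<noteq> {}"
    using assms by auto
  moreover have "continuous_on A (\<lambda>p. fst p \<bullet> (R *v snd p))" for A
    by (intro continuous_intros linear_continuous_on_compose[OF _ matrix_vector_mul_linear])
  ultimately obtain p where p: "p \<in> (S \<inter> sphere 0 1) \<times> (T \<inter> sphere 0 1)"
    and max: "\<forall>q\<in>(S \<inter> sphere 0 1) \<times> (T \<inter> sphere 0 1). fst q \<bullet> (R *v snd q) \<le> fst p \<bullet> (R *v snd p)"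
    using continuous_attains_sup by blast
  show ?thesis
  proof (rule that[of "fst p" "snd p"])
    fix x' y' assume "x' \<in> S" "norm x' = 1" "y' \<in> T" "norm y' = 1"
    then show "x' \<bullet> (R *v y') \<le> fst p \<bullet> (R *v snd p)"
      using max[rule_format, of "(x', y')"] by simp
  qed (use p in auto)
qed

lemma exists_singular_pair:
  fixes R :: "real^'n^'m" and u :: "nat \<Rightarrow> real^'m" and v :: "nat \<Rightarrow> real^'n"
  assumes r: "r < CARD('m)" "r < CARD('n)"
    and Rv: "\<forall>i<r. R *v v i = 0" and uR: "\<forall>i<r. u i v* R = 0"
  obtains x y \<sigma> where "norm x = 1" "norm y = 1" "0 \<le> \<sigma>" "\<forall>i<r. x \<bullet> u i = 0 \<and> y \<bullet> v i = 0"
    "R *v y = \<sigma> *\<^sub>R x" "x v* R = \<sigma> *\<^sub>R y"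
proof -
  define Su where "Su = {x. \<forall>i<r. x \<bullet> u i = 0}"
  define Sv where "Sv = {y. \<forall>i<r. y \<bullet> v i = 0}"
  have sub: "subspace Su" "subspace Sv"
    unfolding Su_def Sv_def subspace_def by (auto simp: inner_add_left)
  have "Su = (\<Inter>i<r. {x. u i \<bullet> x = 0})" "Sv = (\<Inter>i<r. {y. v i \<bullet> y = 0})"
    unfolding Su_def Sv_def by (auto simp: inner_commute)
  then have closed: "closed Su" "closed Sv"
    by (simp_all add: closed_INT closed_hyperplane)
  obtain x0 :: "real^'m" where "norm x0 = 1" "\<forall>i<r. x0 \<bullet> u i = 0"
    using exists_unit_orthogonal_upto[of r u] r by auto
  moreover obtain y0 :: "real^'n" where "norm y0 = 1" "\<forall>i<r. y0 \<bullet> v i = 0"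
    using exists_unit_orthogonal_upto[of r v] r by auto
  ultimately have nonempty: "Su \<inter> sphere 0 1 \<noteq> {}" "Sv \<inter> sphere 0 1 \<noteq> {}"
    unfolding Su_def Sv_def by auto
  obtain x y where x: "x \<in> Su" "norm x = 1" and y: "y \<in> Sv" "norm y = 1"
    and max: "\<And>x' y'. x' \<in> Su \<Longrightarrow> norm x' = 1 \<Longrightarrow> y' \<in> Sv \<Longrightarrow> norm y' = 1
      \<Longrightarrow> x' \<bullet> (R *v y') \<le> x \<bullet> (R *v y)"
    by (rule bilinear_attains_max_on_unit_spheres[OF closed nonempty]) blast
  have Ry: "R *v y \<in> Su"
    using uR unfolding Su_def by (auto simp: inner_commute[of "R *v y"] dot_lmul_matrix[symmetric])
  have xR: "x v* R \<in> Sv"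
    using Rv unfolding Sv_def by (auto simp: dot_lmul_matrix)
  have "R *v y = (x \<bullet> (R *v y)) *\<^sub>R x"
    by (rule eq_scaleR_if_inner_maximal[OF sub(1) x(1) Ry x(2)]) (use max y in blast)
  moreover have "x v* R = (x \<bullet> (R *v y)) *\<^sub>R y"
  proof -
    have xR_inner: "z \<bullet> (x v* R) = x \<bullet> (R *v z)" for z
      by (metis dot_lmul_matrix inner_commute)
    show ?thesis
      using eq_scaleR_if_inner_maximal[OF sub(2) y(1) xR y(2)] max x unfolding xR_inner by blast
  qed
  moreover have "0 \<le> x \<bullet> (R *v y)"
    using max[of "- x" y] x y sub(1) by (simp add: subspace_neg)
  ultimately show ?thesis
    using x y unfolding Su_def Sv_def by (intro that) auto
qed

lemma rank_one_deflation:
  fixes R :: "real^'n^'m"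
  assumes res: "\<forall>i<r. R *v v i = 0 \<and> u i v* R = 0"
    and xy: "\<forall>i<r. x \<bullet> u i = 0 \<and> y \<bullet> v i = 0" and x: "norm x = 1" and y: "norm y = 1"
    and Ry: "R *v y = \<sigma> *\<^sub>R x" and xR: "x v* R = \<sigma> *\<^sub>R y"
  shows "\<forall>i<Suc r. (R - \<sigma> *\<^sub>R outer_prod x y) *v (v(r := y)) i = 0 \<and>
                  (u(r := x)) i v* (R - \<sigma> *\<^sub>R outer_prod x y) = 0"
proof (intro allI impI conjI)
  fix i assume i: "i < Suc r"
  have xx: "x \<bullet> x = 1" and yy: "y \<bullet> y = 1"
    using x y by (simp_all add: norm_eq_1)
  show "(R - \<sigma> *\<^sub>R outer_prod x y) *v (v(r := y)) i = 0"
  proof (cases "i = r")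
    case False
    then have "R *v v i = 0" "y \<bullet> v i = 0"
      using i res xy by auto
    then show ?thesis
      using False by (simp add: matrix_vector_mult_diff_rdistrib scaleR_outer_prod_mult_vec)
  qed (simp add: Ry yy matrix_vector_mult_diff_rdistrib scaleR_outer_prod_mult_vec)
  show "(u(r := x)) i v* (R - \<sigma> *\<^sub>R outer_prod x y) = 0"
  proof (cases "i = r")
    case False
    then have "u i v* R = 0" "u i \<bullet> x = 0"
      using i res xy by (auto simp: inner_commute)
    then show ?thesis
      using False by (simp add: vector_matrix_mult_diff_rdistrib vec_mult_scaleR_outer_prod)
  qed (simp add: xR xx vector_matrix_mult_diff_rdistrib vec_mult_scaleR_outer_prod)
qed

lemma partial_svd_exists:
  fixes G :: "real^'n^'m"
  assumes "r \<le> min CARD('m) CARD('n)"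
  shows "\<exists>u v s. orthonormal_upto r u \<and> orthonormal_upto r v \<and> (\<forall>i<r. 0 \<le> s i) \<and>
    (\<forall>i<r. (G - (\<Sum>k<r. s k *\<^sub>R outer_prod (u k) (v k))) *v v i = 0 \<and>
           u i v* (G - (\<Sum>k<r. s k *\<^sub>R outer_prod (u k) (v k))) = 0)"
  using assms
proof (induction r)
  case 0
  show ?case
    by (simp add: orthonormal_upto_def)
next
  case (Suc r)
  have "r \<le> min CARD('m) CARD('n)"
    using Suc.prems by simp
  then obtain u v s where u: "orthonormal_upto r u" and v: "orthonormal_upto r v"
    and s: "\<forall>i<r. 0 \<le> s i"
    and res: "\<forall>i<r. (G - (\<Sum>k<r. s k *\<^sub>R outer_prod (u k) (v k))) *v v i = 0 \<and>
                   u i v* (G - (\<Sum>k<r. s k *\<^sub>R outer_prod (u k) (v k))) = 0"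
    using Suc.IH by blast
  define R where "R = G - (\<Sum>k<r. s k *\<^sub>R outer_prod (u k) (v k))"
  have resR: "\<forall>i<r. R *v v i = 0 \<and> u i v* R = 0"
    using res unfolding R_def .
  obtain x y \<sigma> where x: "norm x = 1" and y: "norm y = 1" and \<sigma>: "0 \<le> \<sigma>"
    and xy: "\<forall>i<r. x \<bullet> u i = 0 \<and> y \<bullet> v i = 0" and Ry: "R *v y = \<sigma> *\<^sub>R x" and xR: "x v* R = \<sigma> *\<^sub>R y"
    using exists_singular_pair[of r R v u] Suc.prems resR by auto
  have "G - (\<Sum>k<Suc r. (s(r := \<sigma>)) k *\<^sub>R outer_prod ((u(r := x)) k) ((v(r := y)) k))
      = R - \<sigma> *\<^sub>R outer_prod x y"
    unfolding R_def by (simp add: sum.lessThan_Suc)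
  note deflated = this
  have "\<forall>i<Suc r.
      (G - (\<Sum>k<Suc r. (s(r := \<sigma>)) k *\<^sub>R outer_prod ((u(r := x)) k) ((v(r := y)) k))) *v (v(r := y)) i = 0 \<and>
      (u(r := x)) i v* (G - (\<Sum>k<Suc r. (s(r := \<sigma>)) k *\<^sub>R outer_prod ((u(r := x)) k) ((v(r := y)) k))) = 0"
    unfolding deflated by (rule rank_one_deflation[OF resR xy x y Ry xR])
  moreover have "orthonormal_upto (Suc r) (u(r := x))" "orthonormal_upto (Suc r) (v(r := y))"
    using u v xy x y unfolding orthonormal_upto_def by (auto simp: less_Suc_eq inner_commute norm_eq_1)
  moreover have "\<forall>i<Suc r. 0 \<le> (s(r := \<sigma>)) i"
    using s \<sigma> by (simp add: less_Suc_eq)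
  ultimately show ?case
    by blast
qed

lemma thin_svd_exists:
  fixes G :: "real^'n^'m"
  shows "\<exists>u v s. is_thin_svd G u v s"
proof -
  let ?d = "min CARD('m) CARD('n)"
  obtain u v s where u: "orthonormal_upto ?d u" and v: "orthonormal_upto ?d v" and s: "\<forall>i<?d. 0 \<le> s i"
    and res: "\<forall>i<?d. (G - (\<Sum>k<?d. s k *\<^sub>R outer_prod (u k) (v k))) *v v i = 0 \<and>
                     u i v* (G - (\<Sum>k<?d. s k *\<^sub>R outer_prod (u k) (v k))) = 0"
    using partial_svd_exists[of ?d G] by auto
  define R where "R = G - (\<Sum>k<?d. s k *\<^sub>R outer_prod (u k) (v k))"
  have "R *v z = 0" for z
  proof (cases "CARD('m) \<le> CARD('n)")
    case True
    have "(R *v z) \<bullet> u i = 0" if "i < CARD('m)" for i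
      using res that True unfolding R_def[symmetric]
      by (metis dot_lmul_matrix inner_commute inner_zero_left min_absorb1)
    then show ?thesis
      using u True by (intro orthogonal_orthonormal_basis_eq_0) (auto simp: min_absorb1)
  next
    case False
    have "x v* R = 0" for x
    proof -
      have "(x v* R) \<bullet> v i = 0" if "i < CARD('n)" for i
        using res that False unfolding R_def[symmetric] by (simp add: dot_lmul_matrix)
      then show ?thesis
        using v False by (intro orthogonal_orthonormal_basis_eq_0) (auto simp: min_absorb2)
    qed
    then show ?thesis
      by (metis dot_lmul_matrix inner_eq_zero_iff inner_zero_left)
  qed
  then have "R = 0"
    by (simp add: matrix_eq)
  then have "G = (\<Sum>k<?d. s k *\<^sub>R outer_prod (u k) (v k))"
    unfolding R_def by simp
  then show ?thesis
    using u v s unfolding is_thin_svd_iff by blast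
qed

section \<open>Spectral clipping\<close>

lemma spec_clip_svd:
  fixes G :: "real^'n^'m"
  obtains u v s where "orthonormal_upto (min CARD('m) CARD('n)) u"
    "orthonormal_upto (min CARD('m) CARD('n)) v" "\<forall>i<min CARD('m) CARD('n). 0 \<le> s i"
    "G = (\<Sum>i<min CARD('m) CARD('n). s i *\<^sub>R outer_prod (u i) (v i))"
    "spec_clip \<tau> G = (\<Sum>i<min CARD('m) CARD('n). min (s i) \<tau> *\<^sub>R outer_prod (u i) (v i))"
proof -
  have "\<exists>u v s. is_thin_svd G u v s \<and>
      spec_clip \<tau> G = (\<Sum>i<svd_rank TYPE('n) TYPE('m). min (s i) \<tau> *\<^sub>R outer_prod (u i) (v i))"
    unfolding spec_clip_def by (rule someI_ex) (use thin_svd_exists[of G] in blast)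
  then obtain u v s where "is_thin_svd G u v s"
    and "spec_clip \<tau> G = (\<Sum>i<min CARD('m) CARD('n). min (s i) \<tau> *\<^sub>R outer_prod (u i) (v i))"
    unfolding svd_rank_def by blast
  then show ?thesis
    unfolding is_thin_svd_iff by (elim conjE) (rule that)
qed

lemma norm_spec_clip_le:
  fixes G :: "real^'n^'m"
  assumes "0 \<le> \<tau>"
  shows "norm (spec_clip \<tau> G) \<le> sqrt (real (min CARD('m) CARD('n))) * \<tau>"
proof -
  obtain u v s where u: "orthonormal_upto (min CARD('m) CARD('n)) u" and v: "orthonormal_upto (min CARD('m) CARD('n)) v"
    and s: "\<forall>i<min CARD('m) CARD('n). 0 \<le> s i" and G: "G = (\<Sum>i<min CARD('m) CARD('n). s i *\<^sub>R outer_prod (u i) (v i))"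
    and C: "spec_clip \<tau> G = (\<Sum>i<min CARD('m) CARD('n). min (s i) \<tau> *\<^sub>R outer_prod (u i) (v i))"
    by (rule spec_clip_svd)
  have "(norm (spec_clip \<tau> G))\<^sup>2 = (\<Sum>i<min CARD('m) CARD('n). (min (s i) \<tau>)\<^sup>2)"
    unfolding C by (rule norm_sum_outer_prod[OF u v])
  also have "\<dots> \<le> (\<Sum>i<min CARD('m) CARD('n). \<tau>\<^sup>2)"
    using s assms by (intro sum_mono power_mono) auto
  also have "\<dots> = (sqrt (real (min CARD('m) CARD('n))) * \<tau>)\<^sup>2"
    by (simp add: power_mult_distrib)
  finally show ?thesis
    by (rule power2_le_imp_le) (use assms in auto)
qed

lemma norm_spec_clip_le_norm:
  fixes G :: "real^'n^'m"
  assumes "0 \<le> \<tau>"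
  shows "norm (spec_clip \<tau> G) \<le> norm G"
proof -
  obtain u v s where u: "orthonormal_upto (min CARD('m) CARD('n)) u" and v: "orthonormal_upto (min CARD('m) CARD('n)) v"
    and s: "\<forall>i<min CARD('m) CARD('n). 0 \<le> s i" and G: "G = (\<Sum>i<min CARD('m) CARD('n). s i *\<^sub>R outer_prod (u i) (v i))"
    and C: "spec_clip \<tau> G = (\<Sum>i<min CARD('m) CARD('n). min (s i) \<tau> *\<^sub>R outer_prod (u i) (v i))"
    by (rule spec_clip_svd)
  have "(norm (spec_clip \<tau> G))\<^sup>2 = (\<Sum>i<min CARD('m) CARD('n). (min (s i) \<tau>)\<^sup>2)"
    unfolding C by (rule norm_sum_outer_prod[OF u v])
  also have "\<dots> \<le> (\<Sum>i<min CARD('m) CARD('n). (s i)\<^sup>2)"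
    using s assms by (intro sum_mono power_mono) auto
  also have "\<dots> = (norm G)\<^sup>2"
    by (subst G) (rule norm_sum_outer_prod[OF u v, symmetric])
  finally show ?thesis
    by (rule power2_le_imp_le) auto
qed

definition spectral_ball :: "real \<Rightarrow> (real^'n^'m) set" where
  "spectral_ball \<tau> = {A. \<forall>x y. norm x = 1 \<longrightarrow> norm y = 1 \<longrightarrow> x \<bullet> (A *v y) \<le> \<tau>}"

lemma spec_clip_in_spectral_ball:
  fixes G :: "real^'n^'m"
  assumes "0 \<le> \<tau>"
  shows "spec_clip \<tau> G \<in> spectral_ball \<tau>"
  unfolding spectral_ball_def
proof (intro CollectI allI impI)
  fix x :: "real^'m" and y :: "real^'n"
  assume x: "norm x = 1" and y: "norm y = 1"
  let ?d = "min CARD('m) CARD('n)"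
  obtain u v s where u: "orthonormal_upto ?d u" and v: "orthonormal_upto ?d v"
    and s: "\<forall>i<?d. 0 \<le> s i" and G: "G = (\<Sum>i<?d. s i *\<^sub>R outer_prod (u i) (v i))"
    and C: "spec_clip \<tau> G = (\<Sum>i<?d. min (s i) \<tau> *\<^sub>R outer_prod (u i) (v i))"
    by (rule spec_clip_svd)
  have "x \<bullet> (spec_clip \<tau> G *v y) = (\<Sum>i<?d. min (s i) \<tau> * ((x \<bullet> u i) * (y \<bullet> v i)))"
    unfolding outer_prod_inner[symmetric] C
    by (simp add: inner_sum_right outer_prod_inner_outer_prod inner_commute)
  also have "\<dots> \<le> (\<Sum>i<?d. \<tau> * (((x \<bullet> u i)\<^sup>2 + (y \<bullet> v i)\<^sup>2) / 2))"
  proof (intro sum_mono)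
    fix i assume "i \<in> {..<?d}"
    then have m: "0 \<le> min (s i) \<tau>" "min (s i) \<tau> \<le> \<tau>"
      using s assms by auto
    have "(x \<bullet> u i) * (y \<bullet> v i) \<le> ((x \<bullet> u i)\<^sup>2 + (y \<bullet> v i)\<^sup>2) / 2"
      using sum_squares_bound[of "x \<bullet> u i" "y \<bullet> v i"] by (simp add: field_simps)
    then have "min (s i) \<tau> * ((x \<bullet> u i) * (y \<bullet> v i)) \<le> min (s i) \<tau> * (((x \<bullet> u i)\<^sup>2 + (y \<bullet> v i)\<^sup>2) / 2)"
      using m by (intro mult_left_mono) auto
    also have "\<dots> \<le> \<tau> * (((x \<bullet> u i)\<^sup>2 + (y \<bullet> v i)\<^sup>2) / 2)"
      using m by (intro mult_right_mono) auto
    finally show "min (s i) \<tau> * ((x \<bullet> u i) * (y \<bullet> v i)) \<le> \<tau> * (((x \<bullet> u i)\<^sup>2 + (y \<bullet> v i)\<^sup>2) / 2)" .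
  qed
  also have "\<dots> = \<tau> / 2 * ((\<Sum>i<?d. (x \<bullet> u i)\<^sup>2) + (\<Sum>i<?d. (y \<bullet> v i)\<^sup>2))"
    by (simp add: sum.distrib sum_distrib_left add_divide_distrib distrib_left)
  also have "\<dots> \<le> \<tau> / 2 * ((norm x)\<^sup>2 + (norm y)\<^sup>2)"
    using bessel_inequality[OF u, of x] bessel_inequality[OF v, of y] assms
    by (intro mult_left_mono add_mono) auto
  finally show "x \<bullet> (spec_clip \<tau> G *v y) \<le> \<tau>"
    using x y by simp
qed

lemma spec_clip_projection:
  fixes G :: "real^'n^'m"
  assumes "A \<in> spectral_ball \<tau>"
  shows "(G - spec_clip \<tau> G) \<bullet> (A - spec_clip \<tau> G) \<le> 0"
proof -
  let ?d = "min CARD('m) CARD('n)"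
  obtain u v s where u: "orthonormal_upto ?d u" and v: "orthonormal_upto ?d v"
    and s: "\<forall>i<?d. 0 \<le> s i" and G: "G = (\<Sum>i<?d. s i *\<^sub>R outer_prod (u i) (v i))"
    and C: "spec_clip \<tau> G = (\<Sum>i<?d. min (s i) \<tau> *\<^sub>R outer_prod (u i) (v i))"
    by (rule spec_clip_svd)
  have GC: "G - spec_clip \<tau> G = (\<Sum>i<?d. (s i - min (s i) \<tau>) *\<^sub>R outer_prod (u i) (v i))"
    unfolding C by (subst G) (simp add: sum_subtractf scaleR_diff_left)
  have "(G - spec_clip \<tau> G) \<bullet> A = (\<Sum>i<?d. (s i - min (s i) \<tau>) * (u i \<bullet> (A *v v i)))"
    unfolding GC by (simp add: inner_sum_left outer_prod_inner)
  also have "\<dots> \<le> (\<Sum>i<?d. (s i - min (s i) \<tau>) * \<tau>)"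
    using assms orthonormal_upto_norm[OF u] orthonormal_upto_norm[OF v]
    unfolding spectral_ball_def by (intro sum_mono mult_left_mono) auto
  also have "\<dots> = (G - spec_clip \<tau> G) \<bullet> spec_clip \<tau> G"
    unfolding GC by (subst C, subst inner_sum_outer_prod[OF u v]) (auto intro!: sum.cong simp: min_def)
  finally show ?thesis
    by (simp add: inner_diff_right)
qed

lemma projection_nonexpansive:
  fixes P :: "'a::real_inner \<Rightarrow> 'a"
  assumes "\<And>x. P x \<in> S" and "\<And>x y. y \<in> S \<Longrightarrow> (x - P x) \<bullet> (y - P x) \<le> 0"
  shows "norm (P x - P y) \<le> norm (x - y)"
proof -
  have "(x - P x) \<bullet> (P y - P x) \<le> 0" "(y - P y) \<bullet> (P x - P y) \<le> 0"
    using assms by blast+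
  then have "(norm (P x - P y))\<^sup>2 \<le> (x - y) \<bullet> (P x - P y)"
    unfolding power2_norm_eq_inner by (simp add: inner_diff_left inner_diff_right inner_commute)
  also have "\<dots> \<le> norm (x - y) * norm (P x - P y)"
    by (rule norm_cauchy_schwarz)
  finally show ?thesis
    by (cases "P x = P y") (auto simp: power2_eq_square)
qed

lemma spec_clip_nonexpansive:
  fixes G H :: "real^'n^'m"
  assumes "0 \<le> \<tau>"
  shows "norm (spec_clip \<tau> G - spec_clip \<tau> H) \<le> norm (G - H)"
  using spec_clip_in_spectral_ball[OF assms] spec_clip_projection
  by (rule projection_nonexpansive)

lemma borel_measurable_spec_clip [measurable]:
  assumes "0 \<le> \<tau>"
  shows "(spec_clip \<tau> :: real^'n^'m \<Rightarrow> _) \<in> borel_measurable borel"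
proof (rule borel_measurable_continuous_onI, rule lipschitz_on_continuous_on)
  show "1-lipschitz_on UNIV (spec_clip \<tau> :: real^'n^'m \<Rightarrow> _)"
    by (rule lipschitz_onI) (auto simp: dist_norm spec_clip_nonexpansive[OF assms])
qed

lemma sq_le_powr_mult_powr:
  fixes t a b \<alpha> :: real
  assumes "0 \<le> t" "t \<le> a" "t \<le> b" "0 \<le> \<alpha>" "\<alpha> \<le> 2"
  shows "t\<^sup>2 \<le> a powr \<alpha> * b powr (2 - \<alpha>)"
proof (cases "t = 0")
  case False
  then have "t\<^sup>2 = t powr \<alpha> * t powr (2 - \<alpha>)"
    using assms(1) by (simp add: powr_add[symmetric] powr_realpow)
  also have "\<dots> \<le> a powr \<alpha> * b powr (2 - \<alpha>)"
    using assms by (intro mult_mono powr_mono2) auto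
  finally show ?thesis .
qed simp

text \<open>Interpolates between nonexpansiveness and the bound \<open>2 sqrt d \<tau>\<close> on the diameter of the
  range of clipping.\<close>
lemma spec_clip_diff_sq_le:
  fixes G H :: "real^'n^'m"
  assumes "0 \<le> \<tau>" "0 \<le> \<alpha>" "\<alpha> \<le> 2"
  shows "(norm (spec_clip \<tau> G - spec_clip \<tau> H))\<^sup>2
    \<le> norm (G - H) powr \<alpha> * (2 * sqrt (real (min CARD('m) CARD('n))) * \<tau>) powr (2 - \<alpha>)"
proof (rule sq_le_powr_mult_powr)
  have "norm (spec_clip \<tau> G - spec_clip \<tau> H) \<le> norm (spec_clip \<tau> G) + norm (spec_clip \<tau> H)"
    by (rule norm_triangle_ineq4)
  then show "norm (spec_clip \<tau> G - spec_clip \<tau> H) \<le> 2 * sqrt (real (min CARD('m) CARD('n))) * \<tau>"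
    using norm_spec_clip_le[OF assms(1), of G] norm_spec_clip_le[OF assms(1), of H] by linarith
qed (use assms spec_clip_nonexpansive in auto)

section \<open>Smooth functions\<close>

lemma smooth_gradient_norm_le:
  fixes f :: "'a::real_inner \<Rightarrow> real"
  assumes L: "0 < L"
    and smooth: "\<And>A B. f A \<le> f B + gradf B \<bullet> (A - B) + L / 2 * (norm (A - B))\<^sup>2"
    and bdd: "bdd_below (range f)"
  shows "(norm (gradf Y))\<^sup>2 \<le> 2 * L * (f Y - (INF Z. f Z))"
proof -
  let ?A = "Y - (1 / L) *\<^sub>R gradf Y"
  have "(INF Z. f Z) \<le> f ?A"
    using bdd by (simp add: cINF_lower)
  also have "\<dots> \<le> f Y + gradf Y \<bullet> (?A - Y) + L / 2 * (norm (?A - Y))\<^sup>2"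
    by (rule smooth)
  also have "\<dots> = f Y - (norm (gradf Y))\<^sup>2 / (2 * L)"
  proof -
    have "gradf Y \<bullet> (?A - Y) = - (1 / L) * (norm (gradf Y))\<^sup>2"
      by (simp add: power2_norm_eq_inner)
    moreover have "(norm (?A - Y))\<^sup>2 = (1 / L)\<^sup>2 * (norm (gradf Y))\<^sup>2"
      using L by (simp add: power_divide)
    ultimately show ?thesis
      using L by (simp add: field_simps power2_eq_square)
  qed
  finally show ?thesis
    using L by (simp add: field_simps)
qed

text \<open>Each component of the gradient is a pointwise limit of continuous difference quotients.\<close>
lemma borel_measurable_gradient:
  fixes f :: "'a::euclidean_space \<Rightarrow> real"
  assumes grad: "\<And>Y. (f has_derivative (\<lambda>H. gradf Y \<bullet> H)) (at Y)"
  shows "gradf \<in> borel_measurable borel"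
proof -
  have "continuous_on UNIV f"
    using grad has_derivative_continuous continuous_at_imp_continuous_on by blast
  then have [measurable]: "f \<in> borel_measurable borel"
    by (rule borel_measurable_continuous_onI)
  have "(\<lambda>Y. gradf Y \<bullet> b) \<in> borel_measurable borel" for b
  proof (rule borel_measurable_LIMSEQ_real)
    fix Y
    have "((\<lambda>t. f (Y + t *\<^sub>R b)) has_derivative (\<lambda>t. gradf (Y + 0 *\<^sub>R b) \<bullet> (t *\<^sub>R b))) (at 0)"
      by (rule has_derivative_compose[OF _ grad]) (auto intro!: derivative_eq_intros)
    then have "((\<lambda>t. f (Y + t *\<^sub>R b)) has_derivative (\<lambda>t. (gradf Y \<bullet> b) * t)) (at 0)"
      by (simp add: mult.commute)
    then have "((\<lambda>t. f (Y + t *\<^sub>R b)) has_field_derivative (gradf Y \<bullet> b)) (at 0)"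
      by (simp add: has_field_derivative_def)
    then have "((\<lambda>t. (f (Y + t *\<^sub>R b) - f (Y + 0 *\<^sub>R b)) / (t - 0)) \<longlongrightarrow> gradf Y \<bullet> b) (at 0)"
      by (simp add: has_field_derivative_iff)
    moreover have "filterlim (\<lambda>n. inverse (real (Suc n))) (at 0) sequentially"
      unfolding filterlim_at using LIMSEQ_inverse_real_of_nat by auto
    ultimately show "(\<lambda>n. (f (Y + inverse (real (Suc n)) *\<^sub>R b) - f Y) / inverse (real (Suc n)))
        \<longlonglongrightarrow> gradf Y \<bullet> b"
      by (auto dest: filterlim_compose)
  qed measurable
  then show ?thesis
    by (subst borel_measurable_euclidean_space) auto
qed

text \<open>In the descent step, \<open>H\<close> is the gradient, \<open>D\<close> its clipping and \<open>C\<close> the conditional mean of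
  the clipped stochastic gradient.\<close>
lemma clipped_descent_inner_le:
  fixes H C D :: "'a::real_inner"
  assumes c: "0 \<le> c" "c \<le> 1/32" and D: "norm D \<le> norm H"
  shows "- (H \<bullet> C) + c / 2 * (- (norm D)\<^sup>2 + 2 * (D \<bullet> C))
    \<le> - (norm H)\<^sup>2 / 4 + (norm (H - C))\<^sup>2 / 2"
proof -
  define x where "x = norm H"
  define y where "y = norm (H - C)"
  have "H \<bullet> (H - C) \<le> x * y"
    unfolding x_def y_def by (rule norm_cauchy_schwarz)
  then have HC: "x\<^sup>2 - x * y \<le> H \<bullet> C"
    unfolding x_def by (simp add: inner_diff_right power2_norm_eq_inner)
  have "0 \<le> (norm (H - D))\<^sup>2"
    by simp
  then have DH: "- (norm D)\<^sup>2 + 2 * (D \<bullet> H) \<le> x\<^sup>2"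
    unfolding x_def power2_norm_eq_inner by (simp add: inner_diff_left inner_diff_right inner_commute)
  have "D \<bullet> (C - H) \<le> norm D * y"
    using norm_cauchy_schwarz[of D "C - H"] by (simp add: y_def norm_minus_commute)
  also have "\<dots> \<le> x * y"
    using D by (simp add: x_def y_def mult_right_mono)
  finally have "- (norm D)\<^sup>2 + 2 * (D \<bullet> C) \<le> x\<^sup>2 + 2 * x * y"
    using DH by (simp add: inner_diff_right)
  then have "- (H \<bullet> C) + c / 2 * (- (norm D)\<^sup>2 + 2 * (D \<bullet> C)) \<le> - (x\<^sup>2 - x * y) + c / 2 * (x\<^sup>2 + 2 * x * y)"
    using HC c by (smt (verit) mult_left_mono divide_nonneg_pos)
  also have "\<dots> \<le> - x\<^sup>2 / 4 + y\<^sup>2 / 2"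
  proof -
    have "(1 + c)\<^sup>2 \<le> 3/2 - c"
      using c mult_left_mono[OF c(2) c(1)] by (simp add: power2_eq_square algebra_simps)
    then have "(1 + c)\<^sup>2 * x\<^sup>2 \<le> (3/2 - c) * x\<^sup>2"
      by (simp add: mult_right_mono)
    moreover have "0 \<le> ((1 + c) * x - y)\<^sup>2"
      by simp
    ultimately show ?thesis
      by (simp add: power2_eq_square algebra_simps)
  qed
  finally show ?thesis
    unfolding x_def y_def .
qed

section \<open>Conditional expectations of random matrices\<close>

lemma finite_measure_subalgebra_gen_alg:
  assumes "finite_measure M" "X \<in> borel_measurable M"
  shows "finite_measure_subalgebra M (gen_alg M X)"
  using assms sets_image_in_sets[OF refl assms(2)]
  unfolding finite_measure_subalgebra_def finite_measure_subalgebra_axioms_def subalgebra_def gen_alg_def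
  by simp

lemma measurable_gen_alg: "X \<in> measurable (gen_alg M X) borel"
  unfolding gen_alg_def by (rule measurable_vimage_algebra1) simp

lemma borel_measurable_vec_nth [measurable]:
  fixes Z :: "'a \<Rightarrow> 'b::real_normed_vector^'n"
  assumes "Z \<in> borel_measurable N"
  shows "(\<lambda>\<omega>. Z \<omega> $ i) \<in> borel_measurable N"
  using measurable_compose[OF assms borel_measurable_continuous_onI[OF
      linear_continuous_on[OF bounded_linear_vec_nth]]] .

lemma abs_entry_le_norm: "\<bar>A $ i $ j\<bar> \<le> norm (A :: real^'n^'m)"
  using component_le_norm_cart[of "A $ i" j] Finite_Cartesian_Product.norm_nth_le[of A i] by linarith

context finite_measure_subalgebra
begin

lemma integral_inner_mat_cond_exp:
  fixes Z W :: "'a \<Rightarrow> real^'n^'m"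
  assumes Z: "Z \<in> borel_measurable F" "\<And>\<omega>. \<omega> \<in> space M \<Longrightarrow> norm (Z \<omega>) \<le> B"
    and W: "W \<in> borel_measurable M" "\<And>\<omega>. \<omega> \<in> space M \<Longrightarrow> norm (W \<omega>) \<le> B'"
  shows "integrable M (\<lambda>\<omega>. Z \<omega> \<bullet> mat_cond_exp M F W \<omega>)"
    and "(\<integral>\<omega>. Z \<omega> \<bullet> mat_cond_exp M F W \<omega> \<partial>M) = (\<integral>\<omega>. Z \<omega> \<bullet> W \<omega> \<partial>M)"
proof -
  have [measurable]: "Z \<in> borel_measurable M"
    by (rule measurable_from_subalg[OF subalg Z(1)])
  have entry: "integrable M (\<lambda>\<omega>. Z \<omega> $ i $ j * W \<omega> $ i $ j)" for i j
  proof (rule integrable_const_bound[where B = "B * B'"])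
    show "AE \<omega> in M. norm (Z \<omega> $ i $ j * W \<omega> $ i $ j) \<le> B * B'"
    proof (rule AE_I2)
      fix \<omega> assume "\<omega> \<in> space M"
      then have "\<bar>Z \<omega> $ i $ j\<bar> \<le> B" "\<bar>W \<omega> $ i $ j\<bar> \<le> B'"
        using Z(2) W(2) abs_entry_le_norm order_trans by blast+
      then show "norm (Z \<omega> $ i $ j * W \<omega> $ i $ j) \<le> B * B'"
        by (simp add: abs_mult mult_mono')
    qed
  qed (use W(1) in measurable)
  note cond = real_cond_exp_intg[OF entry, of i j for i j, OF borel_measurable_vec_nth[OF borel_measurable_vec_nth[OF Z(1)]]]
  have "(\<lambda>\<omega>. Z \<omega> \<bullet> mat_cond_exp M F W \<omega>)
      = (\<lambda>\<omega>. \<Sum>i\<in>UNIV. \<Sum>j\<in>UNIV. Z \<omega> $ i $ j * real_cond_exp M F (\<lambda>\<omega>'. W \<omega>' $ i $ j) \<omega>)"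
    by (simp add: inner_vec_def mat_cond_exp_def)
  moreover have "(\<lambda>\<omega>. Z \<omega> \<bullet> W \<omega>) = (\<lambda>\<omega>. \<Sum>i\<in>UNIV. \<Sum>j\<in>UNIV. Z \<omega> $ i $ j * W \<omega> $ i $ j)"
    by (simp add: inner_vec_def)
  ultimately show "integrable M (\<lambda>\<omega>. Z \<omega> \<bullet> mat_cond_exp M F W \<omega>)"
    and "(\<integral>\<omega>. Z \<omega> \<bullet> mat_cond_exp M F W \<omega> \<partial>M) = (\<integral>\<omega>. Z \<omega> \<bullet> W \<omega> \<partial>M)"
    using cond entry W(1) by (simp_all add: Bochner_Integration.integral_sum Bochner_Integration.integrable_sum)
qed

lemma integrable_norm_diff_mat_cond_exp_sq:
  fixes Z W :: "'a \<Rightarrow> real^'n^'m"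
  assumes Z: "Z \<in> borel_measurable M" "\<And>\<omega>. \<omega> \<in> space M \<Longrightarrow> norm (Z \<omega>) \<le> B"
    and W: "W \<in> borel_measurable M" "\<And>\<omega>. \<omega> \<in> space M \<Longrightarrow> norm (W \<omega>) \<le> B'"
  shows "integrable M (\<lambda>\<omega>. (norm (Z \<omega> - mat_cond_exp M F W \<omega>))\<^sup>2)"
proof -
  have "integrable M (\<lambda>\<omega>. (Z \<omega> $ i $ j - real_cond_exp M F (\<lambda>\<omega>'. W \<omega>' $ i $ j) \<omega>)\<^sup>2)" for i j
  proof (rule integrable_const_bound[where B = "(B + B')\<^sup>2"])
    have W_entry: "\<omega> \<in> space M \<Longrightarrow> \<bar>W \<omega> $ i $ j\<bar> \<le> B'" for \<omega>
      using W(2) abs_entry_le_norm order_trans by blast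
    have W_int: "integrable M (\<lambda>\<omega>. W \<omega> $ i $ j)"
      using W_entry W(1) by (intro integrable_const_bound[where B = B'] AE_I2) auto
    have "AE \<omega> in M. real_cond_exp M F (\<lambda>\<omega>'. W \<omega>' $ i $ j) \<omega> \<le> B'"
      using W_entry by (intro real_cond_exp_le_c[OF W_int] AE_I2) (simp add: abs_le_iff)
    moreover have "AE \<omega> in M. - B' \<le> real_cond_exp M F (\<lambda>\<omega>'. W \<omega>' $ i $ j) \<omega>"
      using W_entry by (intro real_cond_exp_ge_c[OF W_int] AE_I2) (force simp: abs_le_iff)
    ultimately have "AE \<omega> in M. \<bar>real_cond_exp M F (\<lambda>\<omega>'. W \<omega>' $ i $ j) \<omega>\<bar> \<le> B'"
      by eventually_elim (simp add: abs_le_iff)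
    then show "AE \<omega> in M. norm ((Z \<omega> $ i $ j - real_cond_exp M F (\<lambda>\<omega>'. W \<omega>' $ i $ j) \<omega>)\<^sup>2) \<le> (B + B')\<^sup>2"
      using AE_space
    proof eventually_elim
      case (elim \<omega>)
      moreover have "\<bar>Z \<omega> $ i $ j\<bar> \<le> B"
        using Z(2)[OF elim(2)] abs_entry_le_norm order_trans by blast
      ultimately show ?case
        by (simp add: abs_le_square_iff[symmetric] abs_le_iff)
    qed
  qed (use Z(1) W(1) in measurable)
  moreover have "(norm (Z \<omega> - mat_cond_exp M F W \<omega>))\<^sup>2
      = (\<Sum>i\<in>UNIV. \<Sum>j\<in>UNIV. (Z \<omega> $ i $ j - real_cond_exp M F (\<lambda>\<omega>'. W \<omega>' $ i $ j) \<omega>)\<^sup>2)" for \<omega>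
    unfolding power2_norm_eq_inner by (simp add: inner_vec_def mat_cond_exp_def power2_eq_square)
  ultimately show ?thesis
    by (simp add: Bochner_Integration.integrable_sum)
qed

lemma nn_integral_le_of_nn_cond_exp_le:
  assumes "prob_space M" "e \<in> borel_measurable M" "AE \<omega> in M. nn_cond_exp M F e \<omega> \<le> c"
  shows "(\<integral>\<^sup>+\<omega>. e \<omega> \<partial>M) \<le> c"
proof -
  have "(\<integral>\<^sup>+\<omega>. e \<omega> \<partial>M) = (\<integral>\<^sup>+\<omega>. nn_cond_exp M F e \<omega> \<partial>M)"
    using nn_cond_exp_intg[of "\<lambda>_. 1" e] assms(2) by simp
  also have "\<dots> \<le> (\<integral>\<^sup>+\<omega>. c \<partial>M)"
    by (rule nn_integral_mono_AE[OF assms(3)])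
  finally show ?thesis
    using assms(1) by (simp add: prob_space.emeasure_space_1)
qed

end

section \<open>The clipped stochastic gradient iteration\<close>

lemma abs_inner_le_sq:
  fixes x y :: "'a::real_inner"
  assumes "norm x \<le> R" "norm y \<le> R"
  shows "\<bar>x \<bullet> y\<bar> \<le> R\<^sup>2"
proof -
  have "\<bar>x \<bullet> y\<bar> \<le> norm x * norm y"
    by (rule Cauchy_Schwarz_ineq2)
  also have "\<dots> \<le> R * R"
    using assms by (intro mult_mono) (auto intro: order_trans[OF norm_ge_zero])
  finally show ?thesis
    by (simp add: power2_eq_square)
qed

lemma powr_two_sqrt_mult:
  fixes d \<tau> p :: real
  assumes "0 \<le> d" "0 \<le> \<tau>"
  shows "(2 * sqrt d * \<tau>) powr p = 2 powr p * d powr (p / 2) * \<tau> powr p"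
proof -
  have "sqrt d powr p = d powr (p / 2)"
    using assms(1) by (simp add: powr_half_sqrt[symmetric] powr_powr)
  then show ?thesis
    using assms by (simp add: powr_mult)
qed

lemma (in finite_measure) integrable_abs_bounded:
  fixes h :: "'a \<Rightarrow> real"
  assumes "h \<in> borel_measurable M" "\<And>\<omega>. \<omega> \<in> space M \<Longrightarrow> \<bar>h \<omega>\<bar> \<le> B"
  shows "integrable M h"
  using assms by (intro integrable_const_bound[where B = B] AE_I2) auto

locale clipped_sgd = prob_space M
  for M :: "'a measure" +
  fixes f :: "real^'n^'m \<Rightarrow> real" and gradf :: "real^'n^'m \<Rightarrow> real^'n^'m"
    and L \<tau> \<alpha> \<sigma> \<eta> :: real
    and X0 :: "real^'n^'m" and X G :: "nat \<Rightarrow> 'a \<Rightarrow> real^'n^'m"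
  assumes grad: "\<And>Y. (f has_derivative (\<lambda>H. gradf Y \<bullet> H)) (at Y)"
    and smooth: "\<And>A B. f A \<le> f B + gradf B \<bullet> (A - B) + L / 2 * (norm (A - B))\<^sup>2"
    and bdd: "bdd_below (range f)"
    and L_pos: "0 < L" and tau_nonneg: "0 \<le> \<tau>" and alpha: "0 \<le> \<alpha>" "\<alpha> \<le> 2" and eta_pos: "0 < \<eta>"
    and X0: "\<And>\<omega>. \<omega> \<in> space M \<Longrightarrow> X 0 \<omega> = X0"
    and X_step: "\<And>k \<omega>. \<omega> \<in> space M \<Longrightarrow> X (Suc k) \<omega> = X k \<omega> - \<eta> *\<^sub>R spec_clip \<tau> (G k \<omega>)"
    and X_measurable [measurable]: "\<And>k. X k \<in> borel_measurable M"
    and G_measurable [measurable]: "\<And>k. G k \<in> borel_measurable M"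
    and moment: "\<And>k. AE \<omega> in M.
      nn_cond_exp M (gen_alg M (X k)) (\<lambda>\<omega>'. ennreal (norm (G k \<omega>' - gradf (X k \<omega>')) powr \<alpha>)) \<omega>
        \<le> ennreal (\<sigma> powr \<alpha>)"
begin

definition expected_loss :: "nat \<Rightarrow> real" where
  "expected_loss k = (\<integral>\<omega>. f (X k \<omega>) \<partial>M)"

definition expected_grad_sq :: "nat \<Rightarrow> real" where
  "expected_grad_sq k = (\<integral>\<omega>. (norm (gradf (X k \<omega>)))\<^sup>2 \<partial>M)"

definition clip_bias :: "nat \<Rightarrow> real" where
  "clip_bias k = (\<integral>\<omega>. (norm (gradf (X k \<omega>)
     - mat_cond_exp M (gen_alg M (X k)) (\<lambda>\<omega>'. spec_clip \<tau> (G k \<omega>')) \<omega>))\<^sup>2 \<partial>M)"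

lemma continuous_on_f: "continuous_on UNIV f"
  using grad has_derivative_continuous continuous_at_imp_continuous_on by blast

lemma f_measurable [measurable]: "f \<in> borel_measurable borel"
  by (rule borel_measurable_continuous_onI[OF continuous_on_f])

lemma gradf_measurable [measurable]: "gradf \<in> borel_measurable borel"
  by (rule borel_measurable_gradient[OF grad])

lemmas spec_clip_measurable [measurable] = borel_measurable_spec_clip[OF tau_nonneg]

lemma norm_X_diff_X0_le:
  "\<omega> \<in> space M \<Longrightarrow> norm (X k \<omega> - X0) \<le> real k * (\<eta> * (sqrt (real (min CARD('m) CARD('n))) * \<tau>))"
proof (induction k)
  case (Suc k)
  have "X (Suc k) \<omega> - X0 = (X k \<omega> - X0) - \<eta> *\<^sub>R spec_clip \<tau> (G k \<omega>)"
    using X_step[OF Suc.prems] by simp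
  then have "norm (X (Suc k) \<omega> - X0) \<le> norm (X k \<omega> - X0) + norm (\<eta> *\<^sub>R spec_clip \<tau> (G k \<omega>))"
    by (metis norm_triangle_ineq4)
  also have "\<dots> \<le> real k * (\<eta> * (sqrt (real (min CARD('m) CARD('n))) * \<tau>))
      + \<eta> * (sqrt (real (min CARD('m) CARD('n))) * \<tau>)"
    using Suc norm_spec_clip_le[OF tau_nonneg] eta_pos by (intro add_mono) (auto intro: mult_left_mono)
  finally show ?case
    by (simp add: algebra_simps)
qed (simp add: X0)

text \<open>The gradient need not be continuous; it is bounded through smoothness, which gives
  \<open>norm (gradf Y)\<^sup>2 \<le> 2 L (f Y - inf f)\<close>.\<close>
lemma iterate_bounded:
  obtains R where "\<And>\<omega>. \<omega> \<in> space M \<Longrightarrow> \<bar>f (X k \<omega>)\<bar> \<le> R"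
    "\<And>\<omega>. \<omega> \<in> space M \<Longrightarrow> norm (gradf (X k \<omega>)) \<le> R" "\<And>\<omega>. norm (spec_clip \<tau> (G k \<omega>)) \<le> R"
proof -
  define r where "r = real k * (\<eta> * (sqrt (real (min CARD('m) CARD('n))) * \<tau>))"
  have "bounded (f ` cball X0 r)"
    by (intro compact_imp_bounded compact_continuous_image continuous_on_subset[OF continuous_on_f]) auto
  then obtain B where B: "\<forall>y\<in>f ` cball X0 r. norm y \<le> B"
    unfolding bounded_iff by blast
  have f_bd: "\<bar>f (X k \<omega>)\<bar> \<le> B" if "\<omega> \<in> space M" for \<omega>
    using B norm_X_diff_X0_le[OF that, of k] by (simp add: r_def dist_norm norm_minus_commute)
  have "norm (gradf (X k \<omega>)) \<le> sqrt (2 * L * (B - (INF Y. f Y)))" if "\<omega> \<in> space M" for \<omega>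
  proof (rule real_le_rsqrt)
    have "2 * L * (f (X k \<omega>) - (INF Y. f Y)) \<le> 2 * L * (B - (INF Y. f Y))"
      using f_bd[OF that] L_pos by (intro mult_left_mono) auto
    then show "(norm (gradf (X k \<omega>)))\<^sup>2 \<le> 2 * L * (B - (INF Y. f Y))"
      using smooth_gradient_norm_le[OF L_pos smooth bdd, of "X k \<omega>"] by linarith
  qed
  then show ?thesis
    using f_bd norm_spec_clip_le[OF tau_nonneg]
    by (intro that[of "max B (max (sqrt (2 * L * (B - (INF Y. f Y)))) (sqrt (real (min CARD('m) CARD('n))) * \<tau>))"])
      (force simp: le_max_iff_disj)+
qed

lemma integrable_iterate_terms:
  "integrable M (\<lambda>\<omega>. f (X k \<omega>))"
  "integrable M (\<lambda>\<omega>. (norm (gradf (X k \<omega>)))\<^sup>2)"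
  "integrable M (\<lambda>\<omega>. (norm (spec_clip \<tau> (gradf (X k \<omega>))))\<^sup>2)"
  "integrable M (\<lambda>\<omega>. gradf (X k \<omega>) \<bullet> spec_clip \<tau> (G k \<omega>))"
  "integrable M (\<lambda>\<omega>. spec_clip \<tau> (gradf (X k \<omega>)) \<bullet> spec_clip \<tau> (G k \<omega>))"
  "integrable M (\<lambda>\<omega>. (norm (spec_clip \<tau> (G k \<omega>) - spec_clip \<tau> (gradf (X k \<omega>))))\<^sup>2)"
proof -
  obtain R where f: "\<And>\<omega>. \<omega> \<in> space M \<Longrightarrow> \<bar>f (X k \<omega>)\<bar> \<le> R"
    and H: "\<And>\<omega>. \<omega> \<in> space M \<Longrightarrow> norm (gradf (X k \<omega>)) \<le> R"
    and W: "\<And>\<omega>. norm (spec_clip \<tau> (G k \<omega>)) \<le> R"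
    by (rule iterate_bounded[of k]) blast
  have D: "norm (spec_clip \<tau> (gradf (X k \<omega>))) \<le> R" if "\<omega> \<in> space M" for \<omega>
    using norm_spec_clip_le_norm[OF tau_nonneg] H[OF that] order_trans by blast
  have sq: "\<bar>(norm x)\<^sup>2\<bar> \<le> S\<^sup>2" if "norm x \<le> S" for x :: "real^'n^'m" and S
    using that by (simp add: power_mono)
  have "norm (spec_clip \<tau> (G k \<omega>) - spec_clip \<tau> (gradf (X k \<omega>))) \<le> 2 * R" if "\<omega> \<in> space M" for \<omega>
    using norm_triangle_ineq4 W D[OF that] by (smt (verit))
  then have dist_sq: "\<bar>(norm (spec_clip \<tau> (G k \<omega>) - spec_clip \<tau> (gradf (X k \<omega>))))\<^sup>2\<bar> \<le> (2 * R)\<^sup>2"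
    if "\<omega> \<in> space M" for \<omega>
    using sq that by blast
  show "integrable M (\<lambda>\<omega>. f (X k \<omega>))"
    by (rule integrable_abs_bounded[where B = R]) (use f in auto)
  show "integrable M (\<lambda>\<omega>. (norm (gradf (X k \<omega>)))\<^sup>2)"
    by (rule integrable_abs_bounded[where B = "R\<^sup>2"]) (use sq H in auto)
  show "integrable M (\<lambda>\<omega>. (norm (spec_clip \<tau> (gradf (X k \<omega>))))\<^sup>2)"
    by (rule integrable_abs_bounded[where B = "R\<^sup>2"]) (use sq D in auto)
  show "integrable M (\<lambda>\<omega>. gradf (X k \<omega>) \<bullet> spec_clip \<tau> (G k \<omega>))"
    by (rule integrable_abs_bounded[where B = "R\<^sup>2"]) (auto intro!: abs_inner_le_sq H W)
  show "integrable M (\<lambda>\<omega>. spec_clip \<tau> (gradf (X k \<omega>)) \<bullet> spec_clip \<tau> (G k \<omega>))"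
    by (rule integrable_abs_bounded[where B = "R\<^sup>2"]) (auto intro!: abs_inner_le_sq D W)
  show "integrable M (\<lambda>\<omega>. (norm (spec_clip \<tau> (G k \<omega>) - spec_clip \<tau> (gradf (X k \<omega>))))\<^sup>2)"
    by (rule integrable_abs_bounded[where B = "(2 * R)\<^sup>2"]) (use dist_sq in auto)
qed

lemma finite_measure_subalgebra_iterate: "finite_measure_subalgebra M (gen_alg M (X k))"
  by (rule finite_measure_subalgebra_gen_alg[OF finite_measure_axioms X_measurable])

lemma expected_clip_deviation_le:
  "(\<integral>\<omega>. (norm (spec_clip \<tau> (G k \<omega>) - spec_clip \<tau> (gradf (X k \<omega>))))\<^sup>2 \<partial>M)
    \<le> (2 * sqrt (real (min CARD('m) CARD('n))) * \<tau>) powr (2 - \<alpha>) * \<sigma> powr \<alpha>"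
proof -
  interpret finite_measure_subalgebra M "gen_alg M (X k)"
    by (rule finite_measure_subalgebra_iterate)
  define \<beta> where "\<beta> = (2 * sqrt (real (min CARD('m) CARD('n))) * \<tau>) powr (2 - \<alpha>)"
  define e where "e \<omega> = norm (G k \<omega> - gradf (X k \<omega>)) powr \<alpha>" for \<omega>
  have e_int: "(\<integral>\<^sup>+\<omega>. ennreal (e \<omega>) \<partial>M) \<le> ennreal (\<sigma> powr \<alpha>)"
    unfolding e_def by (rule nn_integral_le_of_nn_cond_exp_le[OF prob_space_axioms _ moment]) measurable
  have "(\<integral>\<^sup>+\<omega>. ennreal ((norm (spec_clip \<tau> (G k \<omega>) - spec_clip \<tau> (gradf (X k \<omega>))))\<^sup>2) \<partial>M)
      \<le> (\<integral>\<^sup>+\<omega>. ennreal \<beta> * ennreal (e \<omega>) \<partial>M)"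
    using spec_clip_diff_sq_le[OF tau_nonneg alpha] unfolding \<beta>_def e_def
    by (intro nn_integral_mono) (simp add: ennreal_mult[symmetric] ennreal_leI mult.commute)
  also have "\<dots> = ennreal \<beta> * (\<integral>\<^sup>+\<omega>. ennreal (e \<omega>) \<partial>M)"
    unfolding e_def by (rule nn_integral_cmult) measurable
  also have "\<dots> \<le> ennreal (\<beta> * \<sigma> powr \<alpha>)"
    using e_int by (simp add: \<beta>_def ennreal_mult mult_left_mono)
  finally have "enn2real (\<integral>\<^sup>+\<omega>. ennreal ((norm (spec_clip \<tau> (G k \<omega>) - spec_clip \<tau> (gradf (X k \<omega>))))\<^sup>2) \<partial>M)
      \<le> enn2real (ennreal (\<beta> * \<sigma> powr \<alpha>))"
    by (rule enn2real_mono) simp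
  then show ?thesis
    unfolding \<beta>_def[symmetric] by (subst integral_eq_nn_integral) (auto simp: \<beta>_def)
qed

lemma expected_clipped_inner_terms_le:
  assumes c: "0 \<le> c" "c \<le> 1/32"
  shows "(\<integral>\<omega>. - (gradf (X k \<omega>) \<bullet> spec_clip \<tau> (G k \<omega>)) + c / 2 *
      (- (norm (spec_clip \<tau> (gradf (X k \<omega>))))\<^sup>2 + 2 * (spec_clip \<tau> (gradf (X k \<omega>)) \<bullet> spec_clip \<tau> (G k \<omega>))) \<partial>M)
    \<le> - expected_grad_sq k / 4 + clip_bias k / 2"
proof -
  define F where "F = gen_alg M (X k)"
  interpret finite_measure_subalgebra M F
    unfolding F_def by (rule finite_measure_subalgebra_iterate)
  define H where "H \<omega> = gradf (X k \<omega>)" for \<omega>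
  define D where "D \<omega> = spec_clip \<tau> (H \<omega>)" for \<omega>
  define W where "W \<omega> = spec_clip \<tau> (G k \<omega>)" for \<omega>
  define C where "C = mat_cond_exp M F W"
  obtain R where H_bd: "\<And>\<omega>. \<omega> \<in> space M \<Longrightarrow> norm (H \<omega>) \<le> R" and W_bd: "\<And>\<omega>. norm (W \<omega>) \<le> R"
    unfolding H_def W_def by (rule iterate_bounded[of k]) blast
  have D_H: "norm (D \<omega>) \<le> norm (H \<omega>)" for \<omega>
    unfolding D_def by (rule norm_spec_clip_le_norm[OF tau_nonneg])
  have H_F: "H \<in> borel_measurable F" and D_F: "D \<in> borel_measurable F"
    unfolding H_def D_def F_def using measurable_gen_alg[of "X k" M] by measurable
  have W_M [measurable]: "W \<in> borel_measurable M"
    unfolding W_def by measurable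
  note HC = integral_inner_mat_cond_exp[OF H_F H_bd W_M W_bd]
  note DC = integral_inner_mat_cond_exp[OF D_F _ W_M W_bd, of R]
  have "(\<integral>\<omega>. - (H \<omega> \<bullet> W \<omega>) + c / 2 * (- (norm (D \<omega>))\<^sup>2 + 2 * (D \<omega> \<bullet> W \<omega>)) \<partial>M)
      = (\<integral>\<omega>. - (H \<omega> \<bullet> C \<omega>) + c / 2 * (- (norm (D \<omega>))\<^sup>2 + 2 * (D \<omega> \<bullet> C \<omega>)) \<partial>M)"
    using HC DC[OF order_trans[OF D_H H_bd]] integrable_iterate_terms[of k]
    unfolding C_def H_def D_def W_def by simp
  also have "\<dots> \<le> (\<integral>\<omega>. - (norm (H \<omega>))\<^sup>2 / 4 + (norm (H \<omega> - C \<omega>))\<^sup>2 / 2 \<partial>M)"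
    using HC DC[OF order_trans[OF D_H H_bd]] integrable_iterate_terms[of k]
      integrable_norm_diff_mat_cond_exp_sq[of H R W R] H_bd W_bd
    unfolding C_def H_def D_def W_def
    by (intro integral_mono clipped_descent_inner_le[OF c norm_spec_clip_le_norm[OF tau_nonneg]]) auto
  also have "\<dots> = - expected_grad_sq k / 4 + clip_bias k / 2"
    using integrable_iterate_terms[of k] integrable_norm_diff_mat_cond_exp_sq[of H R W R] H_bd W_bd
    unfolding expected_grad_sq_def clip_bias_def C_def H_def W_def F_def by simp
  finally show ?thesis
    unfolding H_def D_def W_def .
qed

lemma expected_descent:
  assumes "L * \<eta> \<le> 1/32"
  shows "expected_loss (Suc k) \<le> expected_loss k - \<eta> / 4 * expected_grad_sq k + \<eta> / 2 * clip_bias k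
    + \<eta> * (L * \<eta>) / 2 * ((2 * sqrt (real (min CARD('m) CARD('n))) * \<tau>) powr (2 - \<alpha>) * \<sigma> powr \<alpha>)"
proof -
  define c where "c = L * \<eta>"
  define Q where "Q \<omega> = - (gradf (X k \<omega>) \<bullet> spec_clip \<tau> (G k \<omega>)) + c / 2 *
    (- (norm (spec_clip \<tau> (gradf (X k \<omega>))))\<^sup>2 + 2 * (spec_clip \<tau> (gradf (X k \<omega>)) \<bullet> spec_clip \<tau> (G k \<omega>)))"
    for \<omega>
  define E where "E \<omega> = (norm (spec_clip \<tau> (G k \<omega>) - spec_clip \<tau> (gradf (X k \<omega>))))\<^sup>2" for \<omega>
  have step: "f (X (Suc k) \<omega>) \<le> f (X k \<omega>) + \<eta> * Q \<omega> + \<eta> * c / 2 * E \<omega>" if "\<omega> \<in> space M" for \<omega>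
  proof -
    let ?W = "spec_clip \<tau> (G k \<omega>)" and ?D = "spec_clip \<tau> (gradf (X k \<omega>))"
    have "f (X (Suc k) \<omega>) \<le> f (X k \<omega>) + gradf (X k \<omega>) \<bullet> (X (Suc k) \<omega> - X k \<omega>)
        + L / 2 * (norm (X (Suc k) \<omega> - X k \<omega>))\<^sup>2"
      by (rule smooth)
    also have "\<dots> = f (X k \<omega>) - \<eta> * (gradf (X k \<omega>) \<bullet> ?W) + \<eta> * c / 2 * (norm ?W)\<^sup>2"
      using X_step[OF that] eta_pos by (simp add: c_def power_mult_distrib power2_eq_square)
    also have "(norm ?W)\<^sup>2 = - (norm ?D)\<^sup>2 + 2 * (?D \<bullet> ?W) + (norm (?W - ?D))\<^sup>2"
      unfolding power2_norm_eq_inner by (simp add: inner_diff_left inner_diff_right inner_commute)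
    finally show ?thesis
      unfolding Q_def E_def by (simp add: algebra_simps)
  qed
  have "expected_loss (Suc k) \<le> (\<integral>\<omega>. f (X k \<omega>) + \<eta> * Q \<omega> + \<eta> * c / 2 * E \<omega> \<partial>M)"
    unfolding expected_loss_def Q_def E_def
    using step integrable_iterate_terms[of k] integrable_iterate_terms[of "Suc k"]
    by (intro integral_mono) (auto simp: Q_def E_def)
  also have "\<dots> = expected_loss k + \<eta> * (\<integral>\<omega>. Q \<omega> \<partial>M) + \<eta> * c / 2 * (\<integral>\<omega>. E \<omega> \<partial>M)"
    using integrable_iterate_terms[of k] unfolding expected_loss_def Q_def E_def by simp
  also have "\<dots> \<le> expected_loss k + \<eta> * (- expected_grad_sq k / 4 + clip_bias k / 2)
      + \<eta> * c / 2 * ((2 * sqrt (real (min CARD('m) CARD('n))) * \<tau>) powr (2 - \<alpha>) * \<sigma> powr \<alpha>)"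
    using expected_clipped_inner_terms_le[of c k] expected_clip_deviation_le[of k] eta_pos L_pos assms
    unfolding Q_def E_def c_def by (intro add_mono mult_left_mono) auto
  finally show ?thesis
    unfolding c_def by (simp add: algebra_simps)
qed

lemma expected_loss_0: "expected_loss 0 = f X0"
proof -
  have "expected_loss 0 = (\<integral>\<omega>. f X0 \<partial>M)"
    unfolding expected_loss_def by (rule Bochner_Integration.integral_cong) (simp_all add: X0)
  then show ?thesis
    by (simp add: prob_space)
qed

lemma expected_grad_sq_0: "expected_grad_sq 0 = (norm (gradf X0))\<^sup>2"
proof -
  have "expected_grad_sq 0 = (\<integral>\<omega>. (norm (gradf X0))\<^sup>2 \<partial>M)"
    unfolding expected_grad_sq_def by (rule Bochner_Integration.integral_cong) (simp_all add: X0)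
  then show ?thesis
    by (simp add: prob_space)
qed

lemma INF_le_expected_loss: "(INF Y. f Y) \<le> expected_loss k"
proof -
  have "(\<integral>\<omega>. (INF Y. f Y) \<partial>M) \<le> expected_loss k"
    unfolding expected_loss_def using integrable_iterate_terms(1)[of k] bdd
    by (intro integral_mono) (auto intro: cINF_lower)
  then show ?thesis
    by (simp add: prob_space)
qed

lemma sum_expected_grad_sq_le:
  assumes "L * \<eta> \<le> 1/32"
  shows "\<eta> / 4 * (\<Sum>k<K. expected_grad_sq k)
    \<le> f X0 - (INF Y. f Y) + \<eta> / 2 * (\<Sum>k<K. clip_bias k)
      + real K * (\<eta> * (L * \<eta>) / 2 * ((2 * sqrt (real (min CARD('m) CARD('n))) * \<tau>) powr (2 - \<alpha>) * \<sigma> powr \<alpha>))"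
proof -
  define Z where "Z = \<eta> * (L * \<eta>) / 2 * ((2 * sqrt (real (min CARD('m) CARD('n))) * \<tau>) powr (2 - \<alpha>) * \<sigma> powr \<alpha>)"
  have "expected_loss n \<le> f X0 - (\<Sum>k<n. \<eta> / 4 * expected_grad_sq k) + (\<Sum>k<n. \<eta> / 2 * clip_bias k) + real n * Z" for n
  proof (induction n)
    case (Suc n)
    have "expected_loss (Suc n) \<le> expected_loss n - \<eta> / 4 * expected_grad_sq n + \<eta> / 2 * clip_bias n + Z"
      using expected_descent[OF assms, of n] unfolding Z_def .
    then show ?case
      using Suc.IH by (simp add: distrib_right)
  qed (simp add: expected_loss_0)
  from this[of K] show ?thesis
    using INF_le_expected_loss[of K] unfolding Z_def by (simp add: sum_distrib_left)
qed

lemma min_expected_grad_sq_le: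
  assumes "L * \<eta> \<le> 1/32" "1 \<le> K"
  shows "(MIN k\<in>{..<K}. expected_grad_sq k)
    \<le> 4 * (f X0 - (INF Y. f Y)) / (\<eta> * K) + 2 / K * (\<Sum>k<K. clip_bias k)
      + 2 * (L * \<eta>) * ((2 * sqrt (real (min CARD('m) CARD('n))) * \<tau>) powr (2 - \<alpha>) * \<sigma> powr \<alpha>)"
    (is "_ \<le> 4 * ?A / (\<eta> * K) + 2 / K * ?B + 2 * (L * \<eta>) * ?C")
proof -
  have "real K * (MIN k\<in>{..<K}. expected_grad_sq k) = (\<Sum>k<K. MIN k\<in>{..<K}. expected_grad_sq k)"
    by simp
  also have "\<dots> \<le> (\<Sum>k<K. expected_grad_sq k)"
    by (intro sum_mono Min_le) auto
  also have "\<dots> = 4 / \<eta> * (\<eta> / 4 * (\<Sum>k<K. expected_grad_sq k))"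
    using eta_pos by simp
  also have "\<dots> \<le> 4 / \<eta> * (?A + \<eta> / 2 * ?B + real K * (\<eta> * (L * \<eta>) / 2 * ?C))"
    using sum_expected_grad_sq_le[OF assms(1), of K] eta_pos by (intro mult_left_mono) auto
  also have "\<dots> = real K * (4 * ?A / (\<eta> * K) + 2 / K * ?B + 2 * (L * \<eta>) * ?C)"
    using eta_pos assms(2) by (simp add: field_simps)
  finally show ?thesis
    using assms(2) by (simp add: mult_le_cancel_left_pos)
qed

lemma min_expected_grad_sq_le_initial:
  assumes "1 \<le> K" "K \<le> 64"
  shows "(MIN k\<in>{..<K}. expected_grad_sq k) \<le> 16 * L * (f X0 - (INF Y. f Y)) / sqrt K"
proof -
  have A: "0 \<le> f X0 - (INF Y. f Y)"
    using bdd by (simp add: cINF_lower)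
  have "sqrt K \<le> sqrt 64"
    using assms by (intro real_sqrt_le_mono) simp
  then have "2 * L * (f X0 - (INF Y. f Y)) * sqrt K \<le> 2 * L * (f X0 - (INF Y. f Y)) * 8"
    using A L_pos by (intro mult_left_mono) auto
  then have "2 * L * (f X0 - (INF Y. f Y)) \<le> 16 * L * (f X0 - (INF Y. f Y)) / sqrt K"
    using assms by (simp add: pos_le_divide_eq)
  moreover have "(MIN k\<in>{..<K}. expected_grad_sq k) \<le> expected_grad_sq 0"
    using assms by (intro Min_le) auto
  ultimately show ?thesis
    using smooth_gradient_norm_le[OF L_pos smooth bdd, of X0] by (simp add: expected_grad_sq_0)
qed

lemma min_expected_grad_sq_le_tuned:
  assumes eta: "\<eta> = 1 / (4 * L * sqrt K)" and K: "64 \<le> K"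
  shows "(MIN k\<in>{..<K}. expected_grad_sq k)
    \<le> 16 * L * (f X0 - (INF Y. f Y)) / sqrt K
      + (2 powr (4 - \<alpha>) * real (min CARD('m) CARD('n)) powr (1 - \<alpha> / 2)) * \<tau> powr (2 - \<alpha>) * \<sigma> powr \<alpha>
        / (8 * sqrt K)
      + 2 / K * (\<Sum>k<K. clip_bias k)"
    (is "_ \<le> 16 * L * ?A / sqrt K + ?C / (8 * sqrt K) + 2 / K * ?B")
proof -
  have "sqrt 64 \<le> sqrt K"
    using K by (intro real_sqrt_le_mono) simp
  then have sqrt_K: "8 \<le> sqrt K"
    by simp
  have "L * \<eta> = 1 / (4 * sqrt K)"
    using L_pos by (simp add: eta)
  also have "\<dots> \<le> 1 / (4 * 8)"
    using sqrt_K K by (intro divide_left_mono) auto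
  finally have "L * \<eta> \<le> 1/32"
    by simp
  moreover have "4 * ?A / (\<eta> * K) = 16 * L * ?A / sqrt K"
  proof -
    define s where "s = sqrt K"
    have "real K = s * s" "8 \<le> s"
      using sqrt_K by (simp_all add: s_def)
    then show ?thesis
      unfolding eta s_def[symmetric] using L_pos by (simp add: field_simps)
  qed
  moreover have "2 * (L * \<eta>) * ((2 * sqrt (real (min CARD('m) CARD('n))) * \<tau>) powr (2 - \<alpha>) * \<sigma> powr \<alpha>)
      = ?C / (8 * sqrt K)"
  proof -
    have "(2 * sqrt (real (min CARD('m) CARD('n))) * \<tau>) powr (2 - \<alpha>)
        = 2 powr (2 - \<alpha>) * real (min CARD('m) CARD('n)) powr (1 - \<alpha> / 2) * \<tau> powr (2 - \<alpha>)"
      using powr_two_sqrt_mult[of "real (min CARD('m) CARD('n))" \<tau> "2 - \<alpha>"] tau_nonneg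
      by (simp add: diff_divide_distrib)
    moreover have "2 powr (4 - \<alpha>) = 4 * 2 powr (2 - \<alpha>)"
      using powr_add[of 2 2 "2 - \<alpha>"] by simp
    ultimately show ?thesis
      using L_pos sqrt_K by (simp add: eta field_simps)
  qed
  ultimately show ?thesis
    using min_expected_grad_sq_le[of K] K by simp
qed

lemma min_expected_grad_sq_rate:
  assumes eta: "\<eta> = 1 / (4 * L * sqrt K)" and K: "1 \<le> K"
  shows "(MIN k\<in>{..<K}. expected_grad_sq k)
    \<le> 16 * L * (f X0 - (INF Y. f Y)) / sqrt K
      + (2 powr (4 - \<alpha>) * real (min CARD('m) CARD('n)) powr (1 - \<alpha> / 2)) * \<tau> powr (2 - \<alpha>) * \<sigma> powr \<alpha>
        / (8 * sqrt K)
      + 2 / K * (\<Sum>k<K. clip_bias k)"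
proof (cases "K \<le> 64")
  case True
  have "0 \<le> (\<Sum>k<K. clip_bias k)"
    unfolding clip_bias_def by (intro sum_nonneg integral_nonneg_AE) auto
  then show ?thesis
    using min_expected_grad_sq_le_initial[OF K True] by (simp add: add_increasing2)
next
  case False
  then show ?thesis
    by (intro min_expected_grad_sq_le_tuned[OF eta]) simp
qed

end

theorem theorem1:
  fixes f :: "real^'n^'m \<Rightarrow> real"
    and gradf :: "real^'n^'m \<Rightarrow> real^'n^'m"
    and L \<tau> \<alpha> \<sigma> :: real
    and K :: nat
    and X0 :: "real^'n^'m"
    and M :: "'a measure"
    and X G :: "nat \<Rightarrow> 'a \<Rightarrow> real^'n^'m"
  assumes grad: "\<And>Y. (f has_derivative (\<lambda>H. gradf Y \<bullet> H)) (at Y)"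
    and Lpos: "L > 0"
    and smooth: "\<And>A B. f A \<le> f B + gradf B \<bullet> (A - B) + L / 2 * (norm (A - B))\<^sup>2"
    and bdd: "bdd_below (range f)"
    and tau: "\<tau> > 0"
    and K: "K \<ge> 1"
    and alpha: "1 < \<alpha>" "\<alpha> \<le> 2"
    and sigma: "\<sigma> > 0"
    and P: "prob_space M"
    and X0: "\<And>\<omega>. \<omega> \<in> space M \<Longrightarrow> X 0 \<omega> = X0"
    and Xstep: "\<And>k \<omega>. \<omega> \<in> space M \<Longrightarrow>
        X (Suc k) \<omega> = X k \<omega> - (1 / (4 * L * sqrt K)) *\<^sub>R spec_clip \<tau> (G k \<omega>)"
    and Xmeas: "\<And>k. X k \<in> borel_measurable M"
    and Gmeas: "\<And>k. G k \<in> borel_measurable M"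
    and Gint: "\<And>k. integrable M (G k)"
    and unbiased: "\<And>k i j. AE \<omega> in M.
        real_cond_exp M (gen_alg M (X k)) (\<lambda>\<omega>'. G k \<omega>' $ i $ j) \<omega> = gradf (X k \<omega>) $ i $ j"
    and moment: "\<And>k. AE \<omega> in M.
        nn_cond_exp M (gen_alg M (X k)) (\<lambda>\<omega>'. ennreal (norm (G k \<omega>' - gradf (X k \<omega>')) powr \<alpha>)) \<omega>
          \<le> ennreal (\<sigma> powr \<alpha>)"
  shows "(MIN k\<in>{..<K}. integral\<^sup>L M (\<lambda>\<omega>. (norm (gradf (X k \<omega>)))\<^sup>2))
     \<le> 16 * L * (f X0 - (INF Y. f Y)) / sqrt K
       + (2 powr (4 - \<alpha>) * real (min CARD('m) CARD('n)) powr (1 - \<alpha> / 2))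
           * \<tau> powr (2 - \<alpha>) * \<sigma> powr \<alpha> / (8 * sqrt K)
       + 2 / K * (\<Sum>k<K. integral\<^sup>L M (\<lambda>\<omega>.
           (norm (gradf (X k \<omega>) - mat_cond_exp M (gen_alg M (X k)) (\<lambda>\<omega>'. spec_clip \<tau> (G k \<omega>')) \<omega>))\<^sup>2))"
proof -
  interpret clipped_sgd M f gradf L \<tau> \<alpha> \<sigma> "1 / (4 * L * sqrt K)" X0 X G
    using P grad smooth bdd Lpos tau alpha K X0 Xstep Xmeas Gmeas moment
    by (intro clipped_sgd.intro clipped_sgd_axioms.intro) auto
  show ?thesis
    using min_expected_grad_sq_rate[OF refl K]
    unfolding expected_grad_sq_def clip_bias_def .
qed

end
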